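(* For every $n\ge 3$, if $P$ is chosen uniformly at random from $\mathrm{Motz}^{\{1,2\}}(n)$, then the expected number of up steps and the expected number of down steps of $P$ both equal $\dfrac{n^2+n-6}{4n-6}$, and the expected number of umber steps and the expected number of denim steps both equal $\dfrac{n^2-4n+6}{4n-6}$.
   Context: $\mathrm{Motz}^{\{1,2\}}(n)$ is the set of lattice paths from $(0,0)$ to $(n,0)$ with steps $U=(1,1)$, $D=(1,-1)$ and horizontal steps $(1,0)$ colored umber or denim, never going below the $x$-axis, such that no umber step occurs at height $0$ and no denim step occurs before the first down step. *)

theory Defs
  imports Complex_Main
begin

text \<open>Steps: U = (1,1), D = (1,-1), Hu = umber horizontal, Hd = denim horizontal.\<close>
datatype step = U | D | Hu | Hd

fun delta :: "step \<Rightarrow> int" where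
  "delta U = 1" | "delta D = -1" | "delta Hu = 0" | "delta Hd = 0"

definition ht :: "step list \<Rightarrow> int" where
  "ht P = sum_list (map delta P)"

text \<open>Motz^{1,2}(n): paths of length n from (0,0) to (n,0), never below the x-axis,
  no umber step at height 0 (the height at which the horizontal step is taken),
  no denim step before the first down step.\<close>
definition motz12 :: "nat \<Rightarrow> step list set" where
  "motz12 n = {P. length P = n \<and> ht P = 0
     \<and> (\<forall>k\<le>length P. ht (take k P) \<ge> 0)
     \<and> (\<forall>k<length P. P ! k = Hu \<longrightarrow> ht (take k P) \<noteq> 0)
     \<and> (\<forall>k<length P. P ! k = Hd \<longrightarrow> D \<in> set (take k P))}"

definition nsteps :: "step \<Rightarrow> step list \<Rightarrow> nat" where
  "nsteps s P = length (filter (\<lambda>x. x = s) P)"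

definition expected_steps :: "step \<Rightarrow> nat \<Rightarrow> real" where
  "expected_steps s n = (\<Sum>P\<in>motz12 n. real (nsteps s P)) / real (card (motz12 n))"

end

theory Submission
  imports Defs
begin

text \<open>
  What may follow a prefix of a path depends only on its current height \<open>h\<close> and on whether it
  has already taken a down step. In both states, the number of admissible continuations of
  length \<open>m\<close>, their total number of up steps, and their surplus of denim over umber steps are
  explicit binomial expressions (mostly ballot numbers \<open>C(L,k) - C(L,k-1)\<close>), each verified by
  induction on \<open>m\<close> through Pascal's rule. A path of length \<open>n\<close> is \<open>U\<close> followed by a
  continuation from height 1 before any down step; this gives the number of paths and of their up
  steps, whose ratio simplifies to \<open>(n\<^sup>2 + n - 6) / (4n - 6)\<close> by the absorption identity.
  Before the first down step the denim surplus vanishes identically, down steps match up steps in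
  every path, and the four step counts add up to \<open>n\<close>.
\<close>

definition zbinom :: "int \<Rightarrow> int \<Rightarrow> real" where
  "zbinom L k = (if k < 0 then 0 else real_of_int L gchoose nat k)"

lemma zbinom_neg [simp]: "k < 0 \<Longrightarrow> zbinom L k = 0"
  by (simp add: zbinom_def)

lemma zbinom_of_nat:
  assumes "0 \<le> L" "0 \<le> k"
  shows "zbinom L k = real (nat L choose nat k)"
  using assms by (simp add: zbinom_def binomial_gbinomial)

lemma zbinom_pascal: "zbinom (L + 1) k = zbinom L k + zbinom L (k - 1)"
proof (cases "0 < k")
  case True
  then obtain j where j: "k = int (Suc j)"
    by (metis gr0_implies_Suc of_nat_0_less_iff pos_int_cases)
  then have "nat k = Suc j" "nat (k - 1) = j" by auto
  then show ?thesis
    using gbinomial_Suc_Suc[of "real_of_int L" j] j by (simp add: zbinom_def add.commute)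
next
  case False
  then show ?thesis by (cases "k = 0") (simp_all add: zbinom_def)
qed

lemma zbinom_pascal2:
  "zbinom (L + 2) k = zbinom L k + 2 * zbinom L (k - 1) + zbinom L (k - 2)"
  using zbinom_pascal[of "L + 1" k] zbinom_pascal[of L k] zbinom_pascal[of L "k - 1"]
  by (simp add: algebra_simps)

lemma zbinom_symmetric:
  assumes "0 \<le> L"
  shows "zbinom L (L - k) = zbinom L k"
proof (cases "0 \<le> k \<and> k \<le> L")
  case True
  then have "nat L choose (nat L - nat k) = nat L choose nat k"
    using True by (intro binomial_symmetric[symmetric] nat_mono) simp
  moreover have "nat (L - k) = nat L - nat k" using True by (simp add: nat_diff_distrib)
  ultimately show ?thesis using True by (simp add: zbinom_of_nat)
next
  case False
  then consider "k < 0" | "L < k" by linarith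
  then show ?thesis
  proof cases
    case 1
    then have "nat L < nat (L - k)" using assms by simp
    then show ?thesis using 1 assms by (simp add: zbinom_of_nat)
  next
    case 2
    then have "nat L < nat k" using assms by simp
    then show ?thesis using 2 assms by (simp add: zbinom_of_nat)
  qed
qed

lemma zbinom_absorption:
  "real_of_int (k + 1) * zbinom L (k + 1) = real_of_int (L - k) * zbinom L k"
proof (cases "k < 0")
  case True
  then have "k + 1 < 0 \<or> k + 1 = 0" by auto
  then show ?thesis using True by auto
next
  case False
  then obtain j where j: "k = int j" by (metis nonneg_int_cases not_less)
  then have "nat (k + 1) = Suc j" "nat k = j" by auto
  then show ?thesis
    using gbinomial_mult_1[of "real_of_int L" j] j by (simp add: zbinom_def algebra_simps)
qed

definition ballot :: "int \<Rightarrow> int \<Rightarrow> real" where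
  "ballot L k = zbinom L k - zbinom L (k - 1)"

lemma ballot_pascal: "ballot (L + 1) k = ballot L k + ballot L (k - 1)"
  using zbinom_pascal[of L k] zbinom_pascal[of L "k - 1"] by (simp add: ballot_def)

lemma ballot_pascal2: "ballot (L + 2) k = ballot L k + 2 * ballot L (k - 1) + ballot L (k - 2)"
  using zbinom_pascal2[of L k] zbinom_pascal2[of L "k - 1"] by (simp add: ballot_def algebra_simps)

lemma ballot_central: "0 \<le> x \<Longrightarrow> ballot (2 * x) (x + 1) = - ballot (2 * x) x"
  using zbinom_symmetric[of "2 * x" "x + 1"] by (simp add: ballot_def)

lemma All_le_Suc2: "(\<forall>k\<le>Suc n. Q k) \<longleftrightarrow> Q 0 \<and> (\<forall>k\<le>n. Q (Suc k))"
  by (metis Suc_le_mono le0 not0_implies_Suc)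

lemma ht_Nil [simp]: "ht [] = 0"
  by (simp add: ht_def)

lemma ht_Cons [simp]: "ht (x # P) = delta x + ht P"
  by (simp add: ht_def)

lemma nsteps_Nil [simp]: "nsteps s [] = 0"
  by (simp add: nsteps_def)

lemma nsteps_Cons [simp]: "nsteps s (x # P) = (if x = s then Suc (nsteps s P) else nsteps s P)"
  by (simp add: nsteps_def)

lemma ht_eq_nsteps: "ht P = int (nsteps U P) - int (nsteps D P)"
proof (induction P)
  case (Cons x P)
  then show ?case by (cases x) simp_all
qed simp

lemma length_eq_nsteps: "length P = nsteps U P + nsteps D P + nsteps Hu P + nsteps Hd P"
proof (induction P)
  case (Cons x P)
  then show ?case by (cases x) simp_all
qed simp

text \<open>
  \<open>motz_from d h P\<close>: the path \<open>P\<close> is an admissible continuation of a prefix that ends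
  at height \<open>h\<close> and has (\<open>d\<close>) or has not (\<open>\<not> d\<close>) already taken a down step.
\<close>

definition motz_from :: "bool \<Rightarrow> nat \<Rightarrow> step list \<Rightarrow> bool" where
  "motz_from d h P \<longleftrightarrow> int h + ht P = 0
     \<and> (\<forall>k\<le>length P. int h + ht (take k P) \<ge> 0)
     \<and> (\<forall>k<length P. P ! k = Hu \<longrightarrow> int h + ht (take k P) \<noteq> 0)
     \<and> (\<forall>k<length P. P ! k = Hd \<longrightarrow> d \<or> D \<in> set (take k P))"

lemma motz12_eq_motz_from: "motz12 n = {P. length P = n \<and> motz_from False 0 P}"
  by (auto simp: motz12_def motz_from_def)

lemma motz_from_Nil [simp]: "motz_from d h [] \<longleftrightarrow> h = 0"
  by (simp add: motz_from_def)

lemma motz_from_Cons [simp]: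
  "motz_from d h (x # P) \<longleftrightarrow>
     (case x of
        U \<Rightarrow> motz_from d (Suc h) P
      | D \<Rightarrow> 0 < h \<and> motz_from True (h - 1) P
      | Hu \<Rightarrow> 0 < h \<and> motz_from d h P
      | Hd \<Rightarrow> d \<and> motz_from d h P)"
proof (cases x)
  case U
  then show ?thesis unfolding motz_from_def
    by (simp add: All_le_Suc2 All_less_Suc2 algebra_simps)
next
  case D
  show ?thesis
  proof (cases "0 < h")
    case True
    then have "int (h - 1) = int h - 1" by simp
    then show ?thesis using D True unfolding motz_from_def
      by (simp add: All_le_Suc2 All_less_Suc2 algebra_simps)
  next
    case False
    then have "\<not> (\<forall>k\<le>length (x # P). int h + ht (take k (x # P)) \<ge> 0)"
      using D by (auto intro!: exI[of _ 1])
    then show ?thesis using False D unfolding motz_from_def by auto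
  qed
next
  case Hu
  then show ?thesis unfolding motz_from_def
    by (auto simp: All_le_Suc2 All_less_Suc2)
next
  case Hd
  then show ?thesis unfolding motz_from_def
    by (auto simp: All_le_Suc2 All_less_Suc2)
qed

definition tails :: "bool \<Rightarrow> nat \<Rightarrow> nat \<Rightarrow> step list set" where
  "tails d h m = {P. length P = m \<and> motz_from d h P}"

lemma motz12_eq_tails: "motz12 n = tails False 0 n"
  by (simp add: motz12_eq_motz_from tails_def)

lemma finite_tails [simp]: "finite (tails d h m)"
proof -
  have "(UNIV :: step set) = {U, D, Hu, Hd}"
    using step.exhaust by auto
  then have "finite (UNIV :: step set)"
    by (metis finite.emptyI finite.insertI)
  then have "finite {P. set P \<subseteq> (UNIV :: step set) \<and> length P = m}"
    by (rule finite_lists_length_eq)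
  then show ?thesis
    by (rule finite_subset[rotated]) (auto simp: tails_def)
qed

lemma tails_0: "tails d h 0 = (if h = 0 then {[]} else {})"
  by (auto simp: tails_def)

lemma tails_Suc:
  "tails d h (Suc m) = Cons U ` tails d (Suc h) m
     \<union> (if 0 < h then Cons D ` tails True (h - 1) m \<union> Cons Hu ` tails d h m else {})
     \<union> (if d then Cons Hd ` tails d h m else {})"
  (is "_ = ?R")
proof (rule set_eqI)
  fix P
  show "P \<in> tails d h (Suc m) \<longleftrightarrow> P \<in> ?R"
    by (cases P; cases "hd P") (auto simp: tails_def)
qed

lemma sum_tails_Suc:
  fixes g :: "step list \<Rightarrow> 'a::comm_monoid_add"
  shows "sum g (tails d h (Suc m)) = (\<Sum>P\<in>tails d (Suc h) m. g (U # P))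
     + (if 0 < h then (\<Sum>P\<in>tails True (h - 1) m. g (D # P)) + (\<Sum>P\<in>tails d h m. g (Hu # P)) else 0)
     + (if d then \<Sum>P\<in>tails d h m. g (Hd # P) else 0)"
proof -
  have Cons_disjoint: "x \<noteq> y \<Longrightarrow> Cons x ` A \<inter> Cons y ` B = {}" for x y :: step and A B
    by auto
  have sum_Cons: "sum g (Cons x ` A) = (\<Sum>P\<in>A. g (x # P))" for x A
    by (simp add: sum.reindex)
  show ?thesis
    unfolding tails_Suc
    by (cases "0 < h"; cases d)
       (simp_all add: sum.union_disjoint sum_Cons Int_Un_distrib Int_Un_distrib2 Cons_disjoint)
qed

definition tail_count :: "bool \<Rightarrow> nat \<Rightarrow> nat \<Rightarrow> real" where
  "tail_count d h m = real (card (tails d h m))"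

definition tail_ups :: "bool \<Rightarrow> nat \<Rightarrow> nat \<Rightarrow> real" where
  "tail_ups d h m = (\<Sum>P\<in>tails d h m. real (nsteps U P))"

definition tail_balance :: "bool \<Rightarrow> nat \<Rightarrow> nat \<Rightarrow> real" where
  "tail_balance d h m = (\<Sum>P\<in>tails d h m. real (nsteps Hd P) - real (nsteps Hu P))"

lemma tail_stats_0:
  "tail_count d h 0 = (if h = 0 then 1 else 0)" "tail_ups d h 0 = 0" "tail_balance d h 0 = 0"
  by (simp_all add: tail_count_def tail_ups_def tail_balance_def tails_0)

lemma tail_count_Suc:
  "tail_count d h (Suc m) = tail_count d (Suc h) m
     + (if 0 < h then tail_count True (h - 1) m + tail_count d h m else 0)
     + (if d then tail_count d h m else 0)"
  unfolding tail_count_def real_of_card by (rule sum_tails_Suc)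

lemma tail_ups_Suc:
  "tail_ups d h (Suc m) = tail_ups d (Suc h) m + tail_count d (Suc h) m
     + (if 0 < h then tail_ups True (h - 1) m + tail_ups d h m else 0)
     + (if d then tail_ups d h m else 0)"
  unfolding tail_ups_def tail_count_def real_of_card sum_tails_Suc by (simp add: sum.distrib)

lemma tail_balance_Suc:
  "tail_balance d h (Suc m) = tail_balance d (Suc h) m
     + (if 0 < h then tail_balance True (h - 1) m + tail_balance d h m - tail_count d h m else 0)
     + (if d then tail_balance d h m + tail_count d h m else 0)"
  unfolding tail_balance_def tail_count_def real_of_card sum_tails_Suc
  by (simp add: sum.distrib sum_subtractf algebra_simps)

lemma tail_count_after_down: "tail_count True h m = ballot (2 * int m) (int m - int h)"
proof (induction m arbitrary: h)
  case 0
  then show ?case by (simp add: tail_stats_0 ballot_def zbinom_def)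
next
  case (Suc m)
  show ?case
  proof (cases h)
    case 0
    then show ?thesis
      using Suc.IH[of 0] Suc.IH[of 1] ballot_pascal2[of "2 * int m" "int m + 1"] ballot_central[of "int m"]
      by (simp add: tail_count_Suc algebra_simps)
  next
    case (Suc g)
    then show ?thesis
      using Suc.IH[of g] Suc.IH[of h] Suc.IH[of "Suc h"] ballot_pascal2[of "2 * int m" "int m - int g"]
      by (simp add: tail_count_Suc algebra_simps)
  qed
qed

lemma tail_balance_after_down:
  "tail_balance True h m = ballot (2 * int m - 1) (int m - int h - 1)"
proof (induction m arbitrary: h)
  case 0
  then show ?case by (simp add: tail_stats_0 ballot_def)
next
  case (Suc m)
  show ?case
  proof (cases h)
    case 0
    then show ?thesis
      using Suc.IH[of 0] Suc.IH[of 1] tail_count_after_down[of 0 m]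
        ballot_pascal[of "2 * int m" "int m"] ballot_pascal[of "2 * int m - 1" "int m - 1"]
      by (simp add: tail_balance_Suc algebra_simps)
  next
    case (Suc g)
    then show ?thesis
      using Suc.IH[of g] Suc.IH[of h] Suc.IH[of "Suc h"]
        ballot_pascal2[of "2 * int m - 1" "int m - int g - 1"]
      by (simp add: tail_balance_Suc algebra_simps)
  qed
qed

lemma tail_ups_after_down:
  "tail_ups True h m = (real h + 1) * zbinom (2 * int m - 2) (int m - int h - 2)
     + real h * zbinom (2 * int m - 2) (int m - int h - 3)"
proof (induction m arbitrary: h)
  case 0
  then show ?case by (simp add: tail_stats_0)
next
  case (Suc m)
  show ?case
  proof (cases h)
    case 0
    then show ?thesis
      using Suc.IH[of 0] Suc.IH[of 1] tail_count_after_down[of 1 m]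
        zbinom_pascal2[of "2 * int m - 2" "int m - 1"] zbinom_pascal2[of "2 * int m - 2" "int m - 2"]
      by (simp add: tail_ups_Suc ballot_def algebra_simps)
  next
    case (Suc g)
    then show ?thesis
      using Suc.IH[of g] Suc.IH[of h] Suc.IH[of "Suc h"] tail_count_after_down[of "Suc h" m]
        zbinom_pascal2[of "2 * int m - 2" "int m - int g - 2"]
        zbinom_pascal2[of "2 * int m - 2" "int m - int g - 3"]
      by (simp add: tail_ups_Suc ballot_def algebra_simps)
  qed
qed

lemma tail_count_before_down:
  "0 < h \<Longrightarrow> tail_count False h m = ballot (2 * int m - 1) (int m - int h)"
proof (induction m arbitrary: h)
  case 0
  then show ?case by (simp add: tail_stats_0 ballot_def)
next
  case (Suc m)
  then obtain g where "h = Suc g" using gr0_implies_Suc by blast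
  then show ?case
    using Suc.IH[of h] Suc.IH[of "Suc h"] tail_count_after_down[of g m]
      ballot_pascal[of "2 * int m" "int m - int g"] ballot_pascal[of "2 * int m - 1" "int m - int g - 1"]
    by (simp add: tail_count_Suc algebra_simps)
qed

lemma tail_ups_before_down:
  "0 < h \<Longrightarrow> tail_ups False h m = (real h + 1) * zbinom (2 * int m - 3) (int m - int h - 2)
     + (real h - 1) * zbinom (2 * int m - 3) (int m - int h - 3)"
proof (induction m arbitrary: h)
  case 0
  then show ?case by (simp add: tail_stats_0)
next
  case (Suc m)
  then obtain g where "h = Suc g" using gr0_implies_Suc by blast
  then show ?case
    using Suc.IH[of h] Suc.IH[of "Suc h"] tail_ups_after_down[of g m]
      tail_count_before_down[of "Suc h" m]
      zbinom_pascal2[of "2 * int m - 3" "int m - int g - 2"]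
      zbinom_pascal2[of "2 * int m - 3" "int m - int g - 3"]
      zbinom_pascal[of "2 * int m - 3" "int m - int g - 2"]
      zbinom_pascal[of "2 * int m - 3" "int m - int g - 3"]
    by (simp add: tail_ups_Suc ballot_def algebra_simps)
qed

lemma tail_balance_before_down: "tail_balance False h m = 0"
proof (induction m arbitrary: h)
  case 0
  then show ?case by (simp add: tail_stats_0)
next
  case (Suc m)
  show ?case
  proof (cases h)
    case 0
    then show ?thesis using Suc.IH by (simp add: tail_balance_Suc)
  next
    case (Suc g)
    then show ?thesis
      using Suc.IH tail_balance_after_down[of g m] tail_count_before_down[of h m]
      by (simp add: tail_balance_Suc algebra_simps)
  qed
qed

lemma ballot_middle_eq_zbinom:
  assumes "0 \<le> k"
  shows "real_of_int k * (real_of_int k + 3) * ballot (2 * k + 3) (k + 1)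
    = 4 * (2 * real_of_int k + 3) * zbinom (2 * k + 1) (k - 1)"
proof -
  define r a b c where "r = real_of_int k" and "a = zbinom (2 * k + 1) k"
    and "b = zbinom (2 * k + 1) (k - 1)" and "c = zbinom (2 * k + 1) (k - 2)"
  have "zbinom (2 * k + 1) (k + 1) = a"
    using zbinom_symmetric[of "2 * k + 1" k] assms by (simp add: a_def algebra_simps)
  then have ballot: "ballot (2 * k + 3) (k + 1) = 2 * a - b - c"
    using zbinom_pascal2[of "2 * k + 1" "k + 1"] zbinom_pascal2[of "2 * k + 1" k]
    by (simp add: ballot_def a_def b_def c_def algebra_simps)
  have ab: "r * a = (r + 2) * b"
    using zbinom_absorption[of "k - 1" "2 * k + 1"] by (simp add: r_def a_def b_def algebra_simps)
  have bc: "(r - 1) * b = (r + 3) * c"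
    using zbinom_absorption[of "k - 2" "2 * k + 1"] by (simp add: r_def b_def c_def algebra_simps)
  have "r * (r + 3) * (2 * a - b - c) = 2 * (r + 3) * (r * a) - r * (r + 3) * b - r * ((r + 3) * c)"
    by (simp add: algebra_simps)
  also have "\<dots> = 4 * (2 * r + 3) * b"
    unfolding ab bc[symmetric] by (simp add: algebra_simps)
  finally show ?thesis unfolding ballot by (simp add: r_def b_def)
qed

lemma sum_motz12_Suc:
  fixes g :: "step list \<Rightarrow> 'a::comm_monoid_add"
  shows "(\<Sum>P\<in>motz12 (Suc m). g P) = (\<Sum>P\<in>tails False 1 m. g (U # P))"
  unfolding motz12_eq_tails sum_tails_Suc by simp

lemma card_motz12_Suc: "real (card (motz12 (Suc m))) = tail_count False 1 m"
  unfolding tail_count_def real_of_card by (rule sum_motz12_Suc)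

lemma sum_ups_motz12_Suc:
  "(\<Sum>P\<in>motz12 (Suc m). real (nsteps U P)) = tail_ups False 1 m + tail_count False 1 m"
  unfolding tail_ups_def tail_count_def real_of_card sum_motz12_Suc by (simp add: sum.distrib)

lemma nsteps_D_eq_U_motz12: "P \<in> motz12 n \<Longrightarrow> nsteps D P = nsteps U P"
  using ht_eq_nsteps[of P] by (simp add: motz12_def)

lemma sum_Hd_eq_sum_Hu_motz12:
  "(\<Sum>P\<in>motz12 n. real (nsteps Hd P)) = (\<Sum>P\<in>motz12 n. real (nsteps Hu P))"
  using tail_balance_before_down[of 0 n]
  by (simp add: tail_balance_def motz12_eq_tails sum_subtractf)

lemma motz12_nonempty:
  assumes "2 \<le> n"
  shows "motz12 n \<noteq> {}"
proof -
  have "motz_from d (Suc 0) (replicate j Hu @ [D])" for d j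
    by (induction j) simp_all
  then have "U # replicate (n - 2) Hu @ [D] \<in> motz12 n"
    using assms by (simp add: motz12_eq_motz_from)
  then show ?thesis by blast
qed

lemma expected_steps_U:
  assumes "3 \<le> n"
  shows "expected_steps U n = (real n ^ 2 + real n - 6) / (4 * real n - 6)"
proof -
  obtain m where m: "n = Suc m" "2 \<le> m" using assms by (intro that[of "n - 1"]) auto
  define k where "k = int m - 2"
  define C where "C = real (card (motz12 n))"
  define Z where "Z = zbinom (2 * k + 1) (k - 1)"
  have C: "C = ballot (2 * k + 3) (k + 1)"
    using card_motz12_Suc[of m] tail_count_before_down[of 1 m]
    by (simp add: C_def k_def m algebra_simps)
  have sum_ups: "(\<Sum>P\<in>motz12 n. real (nsteps U P)) = 2 * Z + C"
    using sum_ups_motz12_Suc[of m] tail_ups_before_down[of 1 m] card_motz12_Suc[of m]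
    by (simp add: C_def Z_def k_def m algebra_simps)
  have "C > 0"
    using motz12_nonempty[of n] assms by (simp add: C_def card_gt_0_iff motz12_eq_tails)
  have n: "real n = real_of_int k + 3" and "0 \<le> k"
    using m by (simp_all add: k_def)
  then have "(2 * Z + C) * (4 * real n - 6) = C * (real n ^ 2 + real n - 6)"
    using ballot_middle_eq_zbinom[of k] unfolding C[symmetric] Z_def[symmetric]
    by (simp add: algebra_simps power2_eq_square)
  moreover have "4 * real n - 6 > 0" using n \<open>0 \<le> k\<close> by simp
  ultimately show ?thesis
    using \<open>C > 0\<close> by (simp add: expected_steps_def sum_ups flip: C_def) (simp add: field_simps)
qed

lemma expected_steps_D_eq_U: "expected_steps D n = expected_steps U n"
  unfolding expected_steps_def using nsteps_D_eq_U_motz12 by (simp cong: sum.cong)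

lemma expected_steps_Hd_eq_Hu: "expected_steps Hd n = expected_steps Hu n"
  unfolding expected_steps_def sum_Hd_eq_sum_Hu_motz12 ..

lemma expected_steps_Hu:
  assumes "motz12 n \<noteq> {}"
  shows "expected_steps Hu n = real n / 2 - expected_steps U n"
proof -
  define C where "C = real (card (motz12 n))"
  define SU where "SU = (\<Sum>P\<in>motz12 n. real (nsteps U P))"
  define SH where "SH = (\<Sum>P\<in>motz12 n. real (nsteps Hu P))"
  have "C > 0" using assms by (simp add: C_def card_gt_0_iff motz12_eq_tails)
  have "SH + SH = (\<Sum>P\<in>motz12 n. real (nsteps Hu P) + real (nsteps Hd P))"
    by (simp add: SH_def sum.distrib sum_Hd_eq_sum_Hu_motz12)
  also have "\<dots> = (\<Sum>P\<in>motz12 n. real n - 2 * real (nsteps U P))"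
  proof (rule sum.cong)
    fix P assume P: "P \<in> motz12 n"
    then have "length P = n" by (simp add: motz12_def)
    then have "nsteps Hu P + nsteps Hd P + 2 * nsteps U P = n"
      using length_eq_nsteps[of P] nsteps_D_eq_U_motz12[OF P] by simp
    then show "real (nsteps Hu P) + real (nsteps Hd P) = real n - 2 * real (nsteps U P)"
      by (simp flip: of_nat_add of_nat_mult)
  qed simp
  also have "\<dots> = C * real n - 2 * SU"
    by (simp add: C_def SU_def sum_subtractf sum_distrib_left)
  finally have "SH / C = real n / 2 - SU / C"
    using \<open>C > 0\<close> by (simp add: field_simps)
  then show ?thesis
    by (simp add: expected_steps_def C_def SU_def SH_def)
qed

theorem mainTheorem13:
  fixes n :: nat
  assumes "n \<ge> 3"
  shows "expected_steps U n = (real n ^ 2 + real n - 6) / (4 * real n - 6)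
    \<and> expected_steps D n = (real n ^ 2 + real n - 6) / (4 * real n - 6)
    \<and> expected_steps Hu n = (real n ^ 2 - 4 * real n + 6) / (4 * real n - 6)
    \<and> expected_steps Hd n = (real n ^ 2 - 4 * real n + 6) / (4 * real n - 6)"
proof -
  have U: "expected_steps U n = (real n ^ 2 + real n - 6) / (4 * real n - 6)"
    using assms by (rule expected_steps_U)
  have "4 * real n - 6 > 0" using assms by simp
  then have "real n / 2 - (real n ^ 2 + real n - 6) / (4 * real n - 6)
      = (real n ^ 2 - 4 * real n + 6) / (4 * real n - 6)"
    by (simp add: field_simps power2_eq_square)
  moreover have "expected_steps Hu n = real n / 2 - expected_steps U n"
    using assms motz12_nonempty by (intro expected_steps_Hu) simp
  ultimately show ?thesis
    using U by (simp add: expected_steps_D_eq_U expected_steps_Hd_eq_Hu)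
qed

end
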